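(* Let $q$ be a prime power, $1\le h\le T$ integers, and $p(r)$, $r=0,\dots,h$, a probability distribution. The discrete memoryless channel with input alphabet $\mathcal{P}(\mathbb{F}_q^T,h)$, output alphabet $\bigcup_{r=0}^h \mathcal{P}(\mathbb{F}_q^T,r)$, and transition probabilities $$W(V\mid U) = \begin{cases} \dfrac{p(h-\dim V)}{\binom{h}{\dim V}_q}, & V\subseteq U,\\ 0, & \text{otherwise,}\end{cases}$$ (which, by Theorem 3, is the channel from $\langle\mathbf{X}\rangle$ to $\langle \mathbf{G}\mathbf{X}\rangle$ when $\mathbf{X}$ is a uniformly random ordered basis of the input subspace and $\mathbf{G}$ is an independent random $h\times h$ matrix over $\mathbb{F}_q$ with rank deficiency distribution $p$) has capacity $$C = \max_{P_{\mathbf{U}}} I(\mathbf{U};\mathbf{V}) = \sum_{r=0}^h p(r)\,\log \frac{\binom{T}{h-r}_q}{\binom{h}{h-r}_q},$$ where the maximum is over all probability distributions on $\mathcal{P}(\mathbb{F}_q^T,h)$.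
   Context: $\mathbb{F}_q$ is the finite field with $q$ elements; for a matrix $M$, $\langle M\rangle$ is its row space. $\mathcal{P}(\mathbb{F}_q^T,k)$ is the set of $k$-dimensional subspaces of $\mathbb{F}_q^T$. $\binom{n}{\ell}_q = \prod_{i=0}^{\ell-1}\frac{q^{n-i}-1}{q^{\ell-i}-1}$ is the $q$-ary Gaussian coefficient (number of $\ell$-dimensional subspaces of an $n$-dimensional space over $\mathbb{F}_q$). The rank deficiency of an $h\times h$ matrix $G$ is $h-\operatorname{rank}G$, and $p(r)$ is the probability that the random transfer matrix has rank deficiency $r$. $I(\cdot;\cdot)$ denotes mutual information, with logarithms in a fixed base. *)

theory Defs
  imports "HOL-Analysis.Analysis"
begin

definition gauss_binom :: "nat \<Rightarrow> nat \<Rightarrow> nat \<Rightarrow> real" where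
  "gauss_binom q n l = (\<Prod>i<l. (real q ^ (n - i) - 1) / (real q ^ (l - i) - 1))"

definition is_subspace :: "('a::field ^ 'n) set \<Rightarrow> bool" where
  "is_subspace U = module.subspace (*s) U"

definition sdim :: "('a::field ^ 'n) set \<Rightarrow> nat" where
  "sdim U = vector_space.dim (*s) U"

definition grass :: "nat \<Rightarrow> ('a::field ^ 'n) set set" where
  "grass k = {U. is_subspace U \<and> sdim U = k}"

definition in_alph :: "nat \<Rightarrow> ('a::field ^ 'n) set set" where
  "in_alph h = grass h"

definition out_alph :: "nat \<Rightarrow> ('a::field ^ 'n) set set" where
  "out_alph h = (\<Union>r\<in>{0..h}. grass r)"

definition chanW :: "nat \<Rightarrow> (nat \<Rightarrow> real) \<Rightarrow> ('a::{finite,field} ^ 'n) set \<Rightarrow> ('a ^ 'n) set \<Rightarrow> real" where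
  "chanW h p V U =
     (if V \<subseteq> U then p (h - sdim V) / gauss_binom CARD('a) h (sdim V) else 0)"

definition is_dist :: "'b set \<Rightarrow> ('b \<Rightarrow> real) \<Rightarrow> bool" where
  "is_dist A P = ((\<forall>x\<in>A. 0 \<le> P x) \<and> (\<Sum>x\<in>A. P x) = 1)"

definition mutual_info_dmc ::
  "real \<Rightarrow> 'b set \<Rightarrow> 'c set \<Rightarrow> ('c \<Rightarrow> 'b \<Rightarrow> real) \<Rightarrow> ('b \<Rightarrow> real) \<Rightarrow> real" where
  "mutual_info_dmc b A B W P =
     (\<Sum>u\<in>A. \<Sum>v\<in>B.
        if P u * W v u = 0 then 0
        else P u * W v u * log b (W v u / (\<Sum>u'\<in>A. P u' * W v u')))"

end

theory Submission
  imports Defs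
begin

text \<open>
  The proof is the classical argument for channels whose information density is
  constant: if some output distribution R satisfies, for every input U,
  \<Sum>_V W(V|U) log (W(V|U)/R(V)) = C, then for every input distribution
  I(U;V) = C - D(Q \<parallel> R), where Q is the induced output distribution; Gibbs'
  inequality gives I \<le> C, with equality when Q = R.
\<close>

section \<open>Cardinalities of subspaces over a finite field\<close>

lemma card_field_ge2: "CARD('a::{finite,field}) \<ge> 2"
proof -
  have "card {0::'a, 1} \<le> CARD('a)" by (intro card_mono) auto
  thus ?thesis by simp
qed

text \<open>Adjoining a vector outside the span multiplies the span's size by q:
  (k, y) \<mapsto> k v + y is a bijection from F \<times> span X onto span (insert v X).\<close>
lemma card_span_insert:
  fixes v :: "'a::{finite,field}^'n"
  assumes "v \<notin> vec.span X"
  shows "card (vec.span (insert v X)) = CARD('a) * card (vec.span X)"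
proof -
  define f where "f = (\<lambda>(k::'a, y). k *s v + y)"
  have bij: "bij_betw f ((UNIV::'a set) \<times> vec.span X) (vec.span (insert v X))"
  proof (rule bij_betwI')
    fix x y assume x: "x \<in> (UNIV::'a set) \<times> vec.span X" and y: "y \<in> (UNIV::'a set) \<times> vec.span X"
    obtain k a where xk: "x = (k, a)" by (cases x)
    obtain l c where yl: "y = (l, c)" by (cases y)
    show "(f x = f y) = (x = y)"
    proof
      assume e: "f x = f y"
      hence diff: "(k - l) *s v = c - a" using xk yl
        by (simp add: f_def vector_sub_rdistrib algebra_simps)
      have "k = l"
      proof (rule ccontr)
        assume "k \<noteq> l"
        have "c - a \<in> vec.span X" using x y xk yl by (auto intro: vec.span_diff)
        hence "inverse (k - l) *s ((k - l) *s v) \<in> vec.span X" unfolding diff by (rule vec.span_scale)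
        moreover have "inverse (k - l) *s ((k - l) *s v) = v"
          using \<open>k \<noteq> l\<close> by (simp only: vector_smult_assoc) simp
        ultimately show False using assms by simp
      qed
      thus "x = y" using e xk yl by (simp add: f_def)
    qed simp
  next
    fix x assume "x \<in> (UNIV::'a set) \<times> vec.span X"
    then obtain k a where "x = (k, a)" "a \<in> vec.span X" by auto
    thus "f x \<in> vec.span (insert v X)" unfolding vec.span_insert f_def by (auto intro!: exI[of _ k])
  next
    fix y assume "y \<in> vec.span (insert v X)"
    then obtain k where "y - k *s v \<in> vec.span X" unfolding vec.span_insert by auto
    thus "\<exists>x\<in>(UNIV::'a set) \<times> vec.span X. y = f x"
      by (intro bexI[of _ "(k, y - k *s v)"]) (auto simp: f_def)
  qed
  show ?thesis using bij_betw_same_card[OF bij] by (simp add: card_cartesian_product)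
qed

lemma card_subspace:
  fixes S :: "('a::{finite,field}^'n) set"
  assumes "vec.subspace S"
  shows "card S = CARD('a) ^ vec.dim S"
proof -
  have span_card: "card (vec.span B) = CARD('a) ^ card B" if "vec.independent B" for B :: "('a^'n) set"
  proof -
    have "finite B" by simp
    thus ?thesis using that
    proof (induction B rule: finite_induct)
      case (insert b B)
      hence "vec.independent B" "b \<notin> vec.span B" using vec.independent_insert[of b B] by auto
      thus ?case using insert card_span_insert[of b B] by simp
    qed simp
  qed
  obtain B where B: "B \<subseteq> S" "vec.independent B" "S \<subseteq> vec.span B" "card B = vec.dim S"
    by (rule vec.basis_exists)
  have "vec.span B = S" using vec.span_subspace[OF B(1) B(3) assms] .
  thus ?thesis using span_card[OF B(2)] B(4) by simp
qed

text \<open>Hence the Grassmannian of r-dimensional subspaces consists exactly of the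
  subspaces with q^r elements; this lets us count by cardinality.\<close>
lemma grass_card:
  "(grass r :: ('a::{finite,field}^'n) set set) = {U. vec.subspace U \<and> card U = CARD('a) ^ r}"
proof -
  have "sdim U = r \<longleftrightarrow> card U = CARD('a) ^ r" if "vec.subspace U" for U :: "('a^'n) set"
    using card_subspace[OF that] card_field_ge2[where 'a='a]
    unfolding sdim_def by (simp add: power_inject_exp)
  thus ?thesis unfolding grass_def is_subspace_def by blast
qed

section \<open>Counting intermediate subspaces by extension sequences\<close>

text \<open>A list ws = [w_j, ..., w_1] of vectors of S extends V independently when each
  w_i lies outside the span of V and the earlier vectors.\<close>
fun extends_indep :: "('a::field^'n) set \<Rightarrow> ('a^'n) set \<Rightarrow> ('a^'n) list \<Rightarrow> bool" where
  "extends_indep V S [] = True"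
| "extends_indep V S (w # ws) = (extends_indep V S ws \<and> w \<in> S \<and> w \<notin> vec.span (V \<union> set ws))"

lemma extends_indep_set: "extends_indep V S ws \<Longrightarrow> set ws \<subseteq> S"
  by (induction ws) auto

lemma extends_indep_mono: "extends_indep V S ws \<Longrightarrow> set ws \<subseteq> S' \<Longrightarrow> extends_indep V S' ws"
  by (induction ws) auto

lemma card_span_extends:
  fixes V :: "('a::{finite,field}^'n) set"
  assumes "vec.subspace V" "extends_indep V S ws"
  shows "card (vec.span (V \<union> set ws)) = card V * CARD('a) ^ length ws"
  using assms(2)
proof (induction ws)
  case Nil thus ?case using assms(1) by (simp add: vec.span_eq_iff[THEN iffD2])
next
  case (Cons w ws)
  have "vec.span (V \<union> set (w # ws)) = vec.span (insert w (V \<union> set ws))" by simp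
  thus ?case using Cons card_span_insert[of w "V \<union> set ws"] by simp
qed

definition ext_seqs :: "('a::field^'n) set \<Rightarrow> ('a^'n) set \<Rightarrow> nat \<Rightarrow> ('a^'n) list set" where
  "ext_seqs V S j = {ws. length ws = j \<and> extends_indep V S ws}"

lemma finite_ext_seqs: "finite (ext_seqs (V::('a::{finite,field}^'n) set) S j)"
proof -
  have "ext_seqs V S j \<subseteq> {ws. set ws \<subseteq> UNIV \<and> length ws = j}" unfolding ext_seqs_def by auto
  thus ?thesis using finite_lists_length_eq[of "UNIV::('a^'n) set" j] finite_subset by auto
qed

text \<open>Number of independent extensions of length j of V inside S: the (i+1)-th
  vector can be any of the |S| - |V| q^i vectors outside the current span.\<close>
lemma card_ext_seqs:
  fixes V S :: "('a::{finite,field}^'n) set"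
  assumes "vec.subspace V" "vec.subspace S" "V \<subseteq> S"
  shows "card (ext_seqs V S j) = (\<Prod>i<j. card S - card V * CARD('a) ^ i)"
proof (induction j)
  case 0
  have "ext_seqs V S 0 = {[]}" unfolding ext_seqs_def by auto
  thus ?case by simp
next
  case (Suc j)
  define Cont where "Cont = (SIGMA ws:ext_seqs V S j. S - vec.span (V \<union> set ws))"
  have eq: "ext_seqs V S (Suc j) = (\<lambda>(ws, w). w # ws) ` Cont"
  proof (rule set_eqI)
    fix x show "x \<in> ext_seqs V S (Suc j) \<longleftrightarrow> x \<in> (\<lambda>(ws, w). w # ws) ` Cont"
      unfolding ext_seqs_def Cont_def by (cases x) (auto simp: image_iff)
  qed
  have inj: "inj_on (\<lambda>(ws, w). w # ws) Cont" by (auto simp: inj_on_def)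
  have span_sub: "vec.span (V \<union> set ws) \<subseteq> S" if "ws \<in> ext_seqs V S j" for ws
    using assms extends_indep_set that unfolding ext_seqs_def
    by (metis (no_types, lifting) Un_subset_iff mem_Collect_eq vec.span_minimal)
  have "card (ext_seqs V S (Suc j)) = card Cont"
    unfolding eq by (rule card_image[OF inj])
  also have "\<dots> = (\<Sum>ws\<in>ext_seqs V S j. card (S - vec.span (V \<union> set ws)))"
    unfolding Cont_def using finite_ext_seqs by (intro card_SigmaI) auto
  also have "\<dots> = (\<Sum>ws\<in>ext_seqs V S j. card S - card V * CARD('a) ^ j)"
  proof (rule sum.cong[OF refl])
    fix ws assume ws: "ws \<in> ext_seqs V S j"
    have "card (S - vec.span (V \<union> set ws)) = card S - card (vec.span (V \<union> set ws))"
      using span_sub[OF ws] by (simp add: card_Diff_subset)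
    thus "card (S - vec.span (V \<union> set ws)) = card S - card V * CARD('a) ^ j"
      using card_span_extends[OF assms(1)] ws unfolding ext_seqs_def by auto
  qed
  finally show ?case using Suc by simp
qed

definition intermediate :: "('a::field^'n) set \<Rightarrow> ('a^'n) set \<Rightarrow> nat \<Rightarrow> ('a^'n) set set" where
  "intermediate V S c = {U. vec.subspace U \<and> V \<subseteq> U \<and> U \<subseteq> S \<and> card U = c}"

lemma ext_seqs_fiber:
  fixes V U S :: "('a::{finite,field}^'n) set"
  assumes V: "vec.subspace V" and U: "U \<in> intermediate V S (card V * CARD('a) ^ j)"
  shows "{ws \<in> ext_seqs V S j. vec.span (V \<union> set ws) = U} = ext_seqs V U j"
proof (rule set_eqI, rule iffI)
  fix ws assume "ws \<in> {ws \<in> ext_seqs V S j. vec.span (V \<union> set ws) = U}"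
  hence ws: "length ws = j" "extends_indep V S ws" "vec.span (V \<union> set ws) = U"
    unfolding ext_seqs_def by auto
  have "set ws \<subseteq> U" using ws(3) vec.span_superset by blast
  thus "ws \<in> ext_seqs V U j" using extends_indep_mono[OF ws(2)] ws(1) unfolding ext_seqs_def by auto
next
  fix ws assume "ws \<in> ext_seqs V U j"
  hence ws: "length ws = j" "extends_indep V U ws" unfolding ext_seqs_def by auto
  have U': "vec.subspace U" "V \<subseteq> U" "U \<subseteq> S" "card U = card V * CARD('a) ^ j"
    using U unfolding intermediate_def by auto
  have ext_S: "extends_indep V S ws"
    using extends_indep_mono[OF ws(2)] extends_indep_set[OF ws(2)] U'(3) by blast
  have "vec.span (V \<union> set ws) \<subseteq> U"
    using extends_indep_set[OF ws(2)] U' by (simp add: vec.span_minimal)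
  moreover have "card (vec.span (V \<union> set ws)) = card U"
    using card_span_extends[OF V ws(2)] ws(1) U'(4) by simp
  ultimately have "vec.span (V \<union> set ws) = U" using card_subset_eq[OF finite] by metis
  thus "ws \<in> {ws \<in> ext_seqs V S j. vec.span (V \<union> set ws) = U}"
    using ext_S ws(1) unfolding ext_seqs_def by auto
qed

text \<open>Double counting: every extension of length j inside S spans exactly one
  intermediate subspace of size |V| q^j, and each such subspace U carries as many
  extensions as there are inside U.\<close>
lemma card_intermediate:
  fixes V S :: "('a::{finite,field}^'n) set"
  assumes V: "vec.subspace V" and S: "vec.subspace S" and VS: "V \<subseteq> S"
  shows "card (intermediate V S (card V * CARD('a) ^ j))
           * (\<Prod>i<j. card V * CARD('a) ^ j - card V * CARD('a) ^ i)
       = (\<Prod>i<j. card S - card V * CARD('a) ^ i)"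
proof -
  let ?I = "intermediate V S (card V * CARD('a) ^ j)"
  have partition: "ext_seqs V S j = (\<Union>U\<in>?I. ext_seqs V U j)"
  proof
    show "ext_seqs V S j \<subseteq> (\<Union>U\<in>?I. ext_seqs V U j)"
    proof
      fix ws assume ws: "ws \<in> ext_seqs V S j"
      let ?U = "vec.span (V \<union> set ws)"
      have e: "extends_indep V S ws" "length ws = j" using ws unfolding ext_seqs_def by auto
      have "?U \<subseteq> S" using extends_indep_set[OF e(1)] VS S by (simp add: vec.span_minimal)
      moreover have "V \<subseteq> ?U" using vec.span_superset by blast
      ultimately have "?U \<in> ?I" unfolding intermediate_def
        using card_span_extends[OF V e(1)] e(2) by auto
      moreover have "ws \<in> ext_seqs V ?U j" using ext_seqs_fiber[OF V calculation] ws by blast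
      ultimately show "ws \<in> (\<Union>U\<in>?I. ext_seqs V U j)" by blast
    qed
    show "(\<Union>U\<in>?I. ext_seqs V U j) \<subseteq> ext_seqs V S j" using ext_seqs_fiber[OF V] by blast
  qed
  have disj: "\<forall>U1\<in>?I. \<forall>U2\<in>?I. U1 \<noteq> U2 \<longrightarrow> ext_seqs V U1 j \<inter> ext_seqs V U2 j = {}"
  proof (intro ballI impI)
    fix U1 U2 assume "U1 \<in> ?I" "U2 \<in> ?I" "U1 \<noteq> U2"
    thus "ext_seqs V U1 j \<inter> ext_seqs V U2 j = {}"
      using ext_seqs_fiber[OF V \<open>U1 \<in> ?I\<close>] ext_seqs_fiber[OF V \<open>U2 \<in> ?I\<close>] by blast
  qed
  have "card (ext_seqs V S j) = (\<Sum>U\<in>?I. card (ext_seqs V U j))"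
    unfolding partition by (rule card_UN_disjoint[OF finite _ disj]) (simp add: finite_ext_seqs)
  also have "\<dots> = (\<Sum>U\<in>?I. \<Prod>i<j. card V * CARD('a) ^ j - card V * CARD('a) ^ i)"
    by (rule sum.cong[OF refl]) (auto simp: intermediate_def card_ext_seqs[OF V])
  finally show ?thesis using card_ext_seqs[OF V S VS] by simp
qed

section \<open>q-falling products and Gaussian coefficients\<close>

text \<open>qfall q m k j = (q^m - q^k)(q^m - q^(k+1))...(q^m - q^(k+j-1)), the number of ways
  to extend a k-dimensional subspace of F_q^m by j independent vectors.\<close>
definition qfall :: "nat \<Rightarrow> nat \<Rightarrow> nat \<Rightarrow> nat \<Rightarrow> real" where
  "qfall q m k j = (\<Prod>i<j. real q ^ m - real q ^ (k + i))"

lemma qfall_pos: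
  assumes "q \<ge> 2" "k + j \<le> m"
  shows "qfall q m k j > 0"
  unfolding qfall_def
proof (rule prod_pos)
  fix i assume "i \<in> {..<j}"
  hence "k + i < m" using assms by auto
  hence "real q ^ (k + i) < real q ^ m" using assms by (intro power_strict_increasing) auto
  thus "0 < real q ^ m - real q ^ (k + i)" by simp
qed

lemma qfall_split: "qfall q m 0 (r + s) = qfall q m 0 r * qfall q m r s"
  unfolding qfall_def by (induction s) (auto simp: algebra_simps)

lemma gauss_binom_qfall:
  assumes "q \<ge> 2" "l \<le> n"
  shows "gauss_binom q n l = qfall q n 0 l / qfall q l 0 l"
proof -
  have "gauss_binom q n l = (\<Prod>i<l. (real q ^ n - real q ^ i) / (real q ^ l - real q ^ i))"
    unfolding gauss_binom_def
  proof (rule prod.cong[OF refl])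
    fix i assume "i \<in> {..<l}"
    hence i: "i \<le> n" "i \<le> l" using assms by auto
    have pos: "real q ^ i > 0" using assms by simp
    have "real q ^ n - real q ^ i = real q ^ i * (real q ^ (n - i) - 1)"
      "real q ^ l - real q ^ i = real q ^ i * (real q ^ (l - i) - 1)"
      using i by (simp_all add: right_diff_distrib flip: power_add)
    thus "(real q ^ (n - i) - 1) / (real q ^ (l - i) - 1)
        = (real q ^ n - real q ^ i) / (real q ^ l - real q ^ i)"
      using pos by (simp only: mult_divide_mult_cancel_left)
  qed
  also have "\<dots> = qfall q n 0 l / qfall q l 0 l" unfolding qfall_def by (simp add: prod_dividef)
  finally show ?thesis .
qed

lemma gauss_binom_pos:
  assumes "q \<ge> 2" "l \<le> n"
  shows "gauss_binom q n l > 0"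
  using gauss_binom_qfall[OF assms] qfall_pos[OF assms(1), of 0 l n] qfall_pos[OF assms(1), of 0 l l] assms
  by simp

text \<open>Counting flags V \<subset> U in F_q^T with dim V = r, dim U = h in two ways:
  [T,h] [h,r] = [T,r] \<times> (number of h-spaces containing a fixed r-space).\<close>
lemma gauss_binom_flag:
  assumes q: "q \<ge> 2" and r: "r \<le> h" and h: "h \<le> T"
  shows "gauss_binom q T h * gauss_binom q h r
       = (qfall q T r (h - r) / qfall q h r (h - r)) * gauss_binom q T r"
proof -
  have s1: "qfall q T 0 h = qfall q T 0 r * qfall q T r (h - r)"
    using qfall_split[of q T r "h - r"] r by simp
  have s2: "qfall q h 0 h = qfall q h 0 r * qfall q h r (h - r)"
    using qfall_split[of q h r "h - r"] r by simp
  have pos: "qfall q h 0 r > 0" "qfall q h r (h - r) > 0" "qfall q r 0 r > 0"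
    using qfall_pos[OF q] r by auto
  show ?thesis
    unfolding gauss_binom_qfall[OF q h] gauss_binom_qfall[OF q r]
      gauss_binom_qfall[OF q order.trans[OF r h]] s1 s2
    using pos by (simp add: field_simps)
qed

section \<open>Counting subspaces in the Grassmannian\<close>

lemma card_intermediate_qfall:
  fixes V S :: "('a::{finite,field}^'n) set"
  assumes V: "vec.subspace V" and S: "vec.subspace S" and VS: "V \<subseteq> S"
    and cV: "card V = CARD('a) ^ k" and cS: "card S = CARD('a) ^ m" and km: "k + j \<le> m"
  shows "real (card (intermediate V S (CARD('a) ^ (k + j)))) * qfall CARD('a) (k + j) k j
       = qfall CARD('a) m k j"
proof -
  let ?q = "CARD('a)"
  have q: "?q \<ge> 2" by (rule card_field_ge2)
  have c: "card V * ?q ^ j = ?q ^ (k + j)" using cV by (simp add: power_add)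
  have conv: "real (\<Prod>i<j. ?q ^ a - card V * ?q ^ i) = qfall ?q a k j" if a: "k + j \<le> a" for a
    unfolding qfall_def of_nat_prod
  proof (rule prod.cong[OF refl])
    fix i assume "i \<in> {..<j}"
    hence "?q ^ (k + i) \<le> ?q ^ a" using a q by (intro power_increasing) auto
    thus "real (?q ^ a - card V * ?q ^ i) = real ?q ^ a - real ?q ^ (k + i)"
      by (simp add: cV power_add of_nat_diff)
  qed
  have "real (card (intermediate V S (?q ^ (k + j))) * (\<Prod>i<j. ?q ^ (k + j) - card V * ?q ^ i))
       = real (\<Prod>i<j. ?q ^ m - card V * ?q ^ i)"
    using card_intermediate[OF V S VS, of j] unfolding c cS by simp
  thus ?thesis unfolding of_nat_mult using conv[of "k + j"] conv[OF km] by simp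
qed

lemma card_subspaces_of:
  fixes U :: "('a::{finite,field}^'n) set"
  assumes U: "U \<in> grass h" and r: "r \<le> h"
  shows "real (card {V \<in> grass r. V \<subseteq> U}) = gauss_binom CARD('a) h r"
proof -
  let ?q = "CARD('a)"
  have q: "?q \<ge> 2" by (rule card_field_ge2)
  have Us: "vec.subspace U" "card U = ?q ^ h" using U grass_card by auto
  have e: "{V \<in> grass r. V \<subseteq> U} = intermediate {0} U (?q ^ (0 + r))"
    unfolding grass_card intermediate_def using vec.subspace_0 by auto
  have "real (card {V \<in> grass r. V \<subseteq> U}) * qfall ?q r 0 r = qfall ?q h 0 r"
    unfolding e using card_intermediate_qfall[of "{0}" U 0 h r] Us r vec.subspace_0[OF Us(1)] by simp
  hence "real (card {V \<in> grass r. V \<subseteq> U}) = qfall ?q h 0 r / qfall ?q r 0 r"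
    using qfall_pos[OF q, of 0 r r] by (simp add: eq_divide_eq)
  thus ?thesis using gauss_binom_qfall[OF q r] by simp
qed

lemma card_grass:
  assumes r: "r \<le> CARD('n)"
  shows "real (card (grass r :: ('a::{finite,field}^'n) set set)) = gauss_binom CARD('a) CARD('n) r"
proof -
  let ?q = "CARD('a)"
  have q: "?q \<ge> 2" by (rule card_field_ge2)
  have e: "(grass r :: ('a^'n) set set) = intermediate {0} UNIV (?q ^ (0 + r))"
    unfolding grass_card intermediate_def using vec.subspace_0 by auto
  have "real (card (grass r :: ('a^'n) set set)) * qfall ?q r 0 r = qfall ?q CARD('n) 0 r"
    unfolding e using card_intermediate_qfall[of "{0::'a^'n}" UNIV 0 "CARD('n)" r] r by simp
  hence "real (card (grass r :: ('a^'n) set set)) = qfall ?q CARD('n) 0 r / qfall ?q r 0 r"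
    using qfall_pos[OF q, of 0 r r] by (simp add: eq_divide_eq)
  thus ?thesis using gauss_binom_qfall[OF q r] by simp
qed

lemma card_superspaces:
  fixes V :: "('a::{finite,field}^'n) set"
  assumes V: "V \<in> grass r" and r: "r \<le> h" and h: "h \<le> CARD('n)"
  shows "real (card {U \<in> grass h. V \<subseteq> U}) * qfall CARD('a) h r (h - r)
       = qfall CARD('a) CARD('n) r (h - r)"
proof -
  have Vs: "vec.subspace V" "card V = CARD('a) ^ r" using V grass_card by auto
  have "{U \<in> grass h. V \<subseteq> U} = intermediate V UNIV (CARD('a) ^ (r + (h - r)))"
    unfolding grass_card intermediate_def using r by auto
  thus ?thesis using card_intermediate_qfall[of V UNIV r "CARD('n)" "h - r"] Vs r h by simp
qed

section \<open>Channels with constant information density\<close>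

text \<open>Gibbs' inequality: the relative entropy of an output distribution Q with
  respect to a distribution R is nonnegative, here in the form
  \<Sum> Q log (R/Q) \<le> 0 (using ln x \<le> x - 1).\<close>
lemma gibbs_inequality:
  fixes Q R :: "'c \<Rightarrow> real"
  assumes "b > 1" and "finite B"
    and Q_nonneg: "\<And>v. v \<in> B \<Longrightarrow> 0 \<le> Q v" and R_nonneg: "\<And>v. v \<in> B \<Longrightarrow> 0 \<le> R v"
    and sums: "(\<Sum>v\<in>B. Q v) = (\<Sum>v\<in>B. R v)"
    and R_pos: "\<And>v. v \<in> B \<Longrightarrow> Q v \<noteq> 0 \<Longrightarrow> 0 < R v"
  shows "(\<Sum>v\<in>B. Q v * log b (R v / Q v)) \<le> 0"
proof -
  have lnb: "ln b > 0" using \<open>b > 1\<close> by simp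
  have termwise: "Q v * log b (R v / Q v) \<le> (R v - Q v) / ln b" if v: "v \<in> B" for v
  proof (cases "Q v = 0")
    case True thus ?thesis using R_nonneg[OF v] lnb by simp
  next
    case False
    hence qv: "Q v > 0" and rv: "R v > 0" using Q_nonneg[OF v] R_pos[OF v] by auto
    have "Q v * ln (R v / Q v) \<le> Q v * (R v / Q v - 1)"
      using qv rv by (intro mult_left_mono ln_le_minus_one) auto
    also have "\<dots> = R v - Q v" using qv by (simp add: field_simps)
    finally show ?thesis using lnb unfolding log_def by (simp add: divide_right_mono)
  qed
  have "(\<Sum>v\<in>B. Q v * log b (R v / Q v)) \<le> (\<Sum>v\<in>B. (R v - Q v) / ln b)"
    using termwise by (rule sum_mono)
  also have "\<dots> = ((\<Sum>v\<in>B. R v) - (\<Sum>v\<in>B. Q v)) / ln b"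
    by (simp add: sum_divide_distrib[symmetric] sum_subtractf)
  finally show ?thesis using sums by simp
qed

locale constant_density_channel =
  fixes b :: real and A :: "'b set" and B :: "'c set"
    and W :: "'c \<Rightarrow> 'b \<Rightarrow> real" and R :: "'c \<Rightarrow> real" and C :: real
  assumes base: "b > 1"
    and finite_A: "finite A" and finite_B: "finite B"
    and W_nonneg: "\<And>u v. u \<in> A \<Longrightarrow> v \<in> B \<Longrightarrow> 0 \<le> W v u"
    and W_row_sum: "\<And>u. u \<in> A \<Longrightarrow> (\<Sum>v\<in>B. W v u) = 1"
    and R_nonneg: "\<And>v. v \<in> B \<Longrightarrow> 0 \<le> R v"
    and R_sum: "(\<Sum>v\<in>B. R v) = 1"
    and R_pos: "\<And>u v. u \<in> A \<Longrightarrow> v \<in> B \<Longrightarrow> W v u \<noteq> 0 \<Longrightarrow> 0 < R v"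
    and density: "\<And>u. u \<in> A \<Longrightarrow>
        (\<Sum>v\<in>B. if W v u = 0 then 0 else W v u * log b (W v u / R v)) = C"
begin

definition out_dist :: "('b \<Rightarrow> real) \<Rightarrow> 'c \<Rightarrow> real" where
  "out_dist P v = (\<Sum>u\<in>A. P u * W v u)"

text \<open>I(P) = C - D(out_dist P \<parallel> R): split log (W/Q) = log (W/R) + log (R/Q) in each
  term and use the constant density for the first part.\<close>
lemma mutual_info_decomposition:
  assumes P: "is_dist A P"
  shows "mutual_info_dmc b A B W P = C + (\<Sum>v\<in>B. out_dist P v * log b (R v / out_dist P v))"
proof -
  have P_nonneg: "\<And>u. u \<in> A \<Longrightarrow> 0 \<le> P u" and P_sum: "(\<Sum>u\<in>A. P u) = 1"
    using P unfolding is_dist_def by auto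
  define d where "d = (\<lambda>u v. if W v u = 0 then 0 else W v u * log b (W v u / R v))"
  have split: "(if P u * W v u = 0 then 0 else P u * W v u * log b (W v u / out_dist P v))
      = P u * d u v + P u * W v u * log b (R v / out_dist P v)" if u: "u \<in> A" and v: "v \<in> B" for u v
  proof (cases "P u * W v u = 0")
    case True thus ?thesis unfolding d_def by auto
  next
    case False
    have pu: "P u > 0" and wu: "W v u > 0"
      using P_nonneg[OF u] W_nonneg[OF u v] False by (auto simp: less_le)
    have rv: "R v > 0" using R_pos[OF u v] wu by simp
    have "P u * W v u \<le> out_dist P v" unfolding out_dist_def
      using P_nonneg W_nonneg[OF _ v] by (intro member_le_sum[OF u _ finite_A]) auto
    hence qv: "out_dist P v > 0" using mult_pos_pos[OF pu wu] by linarith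
    show ?thesis unfolding d_def using False pu wu rv qv
      by (simp add: log_divide algebra_simps)
  qed
  have "mutual_info_dmc b A B W P
      = (\<Sum>u\<in>A. \<Sum>v\<in>B. P u * d u v + P u * W v u * log b (R v / out_dist P v))"
    unfolding mutual_info_dmc_def out_dist_def[symmetric] by (intro sum.cong refl split)
  also have "\<dots> = (\<Sum>u\<in>A. P u * (\<Sum>v\<in>B. d u v))
      + (\<Sum>v\<in>B. \<Sum>u\<in>A. P u * W v u * log b (R v / out_dist P v))"
    by (simp add: sum.distrib sum_distrib_left sum.swap[of _ B A])
  also have "(\<Sum>u\<in>A. P u * (\<Sum>v\<in>B. d u v)) = C"
    using density P_sum unfolding d_def by (simp add: sum_distrib_right[symmetric])
  also have "(\<Sum>v\<in>B. \<Sum>u\<in>A. P u * W v u * log b (R v / out_dist P v))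
      = (\<Sum>v\<in>B. out_dist P v * log b (R v / out_dist P v))"
    unfolding out_dist_def by (simp add: sum_distrib_right)
  finally show ?thesis .
qed

lemma out_dist_sum:
  assumes "is_dist A P"
  shows "(\<Sum>v\<in>B. out_dist P v) = 1"
proof -
  have "(\<Sum>v\<in>B. out_dist P v) = (\<Sum>u\<in>A. P u * (\<Sum>v\<in>B. W v u))"
    unfolding out_dist_def by (simp add: sum.swap[of _ B A] sum_distrib_left)
  thus ?thesis using assms W_row_sum unfolding is_dist_def by simp
qed

lemma mutual_info_le:
  assumes P: "is_dist A P"
  shows "mutual_info_dmc b A B W P \<le> C"
proof -
  have P_nonneg: "\<And>u. u \<in> A \<Longrightarrow> 0 \<le> P u" using P unfolding is_dist_def by auto
  have Q_nonneg: "0 \<le> out_dist P v" if "v \<in> B" for v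
    unfolding out_dist_def using P_nonneg W_nonneg[OF _ that] by (auto intro: sum_nonneg)
  have "0 < R v" if v: "v \<in> B" and "out_dist P v \<noteq> 0" for v
  proof -
    obtain u where "u \<in> A" "P u * W v u \<noteq> 0"
      using \<open>out_dist P v \<noteq> 0\<close> unfolding out_dist_def by (meson sum.neutral)
    thus ?thesis using R_pos[OF _ v] by auto
  qed
  hence "(\<Sum>v\<in>B. out_dist P v * log b (R v / out_dist P v)) \<le> 0"
    using gibbs_inequality[OF base finite_B] Q_nonneg R_nonneg out_dist_sum[OF P] R_sum by simp
  thus ?thesis using mutual_info_decomposition[OF P] by simp
qed

lemma mutual_info_eq:
  assumes P: "is_dist A P" and out_dist_R: "\<And>v. v \<in> B \<Longrightarrow> out_dist P v = R v"
  shows "mutual_info_dmc b A B W P = C"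
proof -
  have "(\<Sum>v\<in>B. out_dist P v * log b (R v / out_dist P v)) = 0"
    by (rule sum.neutral) (simp add: out_dist_R)
  thus ?thesis using mutual_info_decomposition[OF P] by simp
qed

end

section \<open>The subspace channel\<close>

lemma sum_out_alph:
  fixes g :: "('a::{finite,field}^'n) set \<Rightarrow> real"
  shows "(\<Sum>V\<in>out_alph h. g V) = (\<Sum>r\<le>h. \<Sum>V\<in>grass r. g V)"
proof -
  have "(\<Sum>V\<in>out_alph h. g V) = (\<Sum>r\<in>{0..h}. \<Sum>V\<in>(grass r :: ('a^'n) set set). g V)"
    unfolding out_alph_def by (rule sum.UNION_disjoint) (auto simp: grass_def)
  thus ?thesis by (simp add: atLeast0AtMost)
qed

lemma out_alph_mem: "V \<in> out_alph h \<Longrightarrow> sdim V \<le> h \<and> V \<in> grass (sdim V)"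
  by (auto simp: out_alph_def grass_def)

text \<open>A sum over the subspaces of an h-space U of a function of the dimension:
  each dimension r occurs [h, r]_q times.\<close>
lemma sum_subspaces_of:
  fixes U :: "('a::{finite,field}^'n) set" and f :: "nat \<Rightarrow> real"
  assumes U: "U \<in> grass h"
  shows "(\<Sum>V\<in>out_alph h. if V \<subseteq> U then f (sdim V) else 0)
       = (\<Sum>r\<le>h. gauss_binom CARD('a) h r * f r)"
  unfolding sum_out_alph
proof (rule sum.cong[OF refl])
  fix r assume r: "r \<in> {..h}"
  have "(\<Sum>V\<in>(grass r :: ('a^'n) set set). if V \<subseteq> U then f (sdim V) else 0)
      = (\<Sum>V\<in>{V \<in> grass r. V \<subseteq> U}. f r)"
    by (simp add: sum.inter_filter[symmetric] grass_def)
  also have "\<dots> = gauss_binom CARD('a) h r * f r"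
    using card_subspaces_of[OF U, of r] r by simp
  finally show "(\<Sum>V\<in>(grass r :: ('a^'n) set set). if V \<subseteq> U then f (sdim V) else 0)
      = gauss_binom CARD('a) h r * f r" .
qed

lemma sum_atMost_reverse: "(\<Sum>r\<le>(h::nat). f (h - r)) = (\<Sum>r\<le>h. (f r :: real))"
proof -
  have "(\<Sum>r\<in>{0..h}. f r) = (\<Sum>r\<in>{0..h}. f (h + 0 - r))" by (rule sum.atLeastAtMost_rev)
  thus ?thesis by (simp add: atLeast0AtMost)
qed

text \<open>The reference output distribution R(V) = p(h - dim V) / [T, dim V]_q: the rank
  deficiency is distributed according to p and, given the dimension, V is uniform
  on the Grassmannian.\<close>
definition subspace_out_dist :: "nat \<Rightarrow> (nat \<Rightarrow> real) \<Rightarrow> ('a::{finite,field}^'n) set \<Rightarrow> real" where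
  "subspace_out_dist h p V = p (h - sdim V) / gauss_binom CARD('a) CARD('n) (sdim V)"

context
  fixes h :: nat and p :: "nat \<Rightarrow> real"
  assumes h_le: "h \<le> CARD('n::finite)"
    and p_nonneg: "\<forall>r\<le>h. 0 \<le> p r" and p_sum: "(\<Sum>r\<le>h. p r) = 1"
begin

lemma gauss_binom_pos_h: "r \<le> h \<Longrightarrow> gauss_binom CARD('a::{finite,field}) h r > 0"
  using gauss_binom_pos[OF card_field_ge2[where 'a='a]] by simp

lemma gauss_binom_pos_T: "r \<le> h \<Longrightarrow> gauss_binom CARD('a::{finite,field}) CARD('n) r > 0"
  using gauss_binom_pos[OF card_field_ge2[where 'a='a], of r "CARD('n)"] h_le by simp

lemma chanW_nonneg:
  "V \<in> out_alph h \<Longrightarrow> 0 \<le> chanW h p (V :: ('a::{finite,field}^'n) set) U"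
  unfolding chanW_def using out_alph_mem p_nonneg gauss_binom_pos_h[where 'a='a]
  by (auto intro!: divide_nonneg_pos)

text \<open>W(\<cdot>|U) is a probability distribution: dimension r = h - (rank deficiency)
  has probability p(h - r), spread uniformly over the [h, r]_q subspaces of U.\<close>
lemma chanW_row_sum:
  assumes "U \<in> in_alph h"
  shows "(\<Sum>V\<in>out_alph h. chanW h p V (U :: ('a::{finite,field}^'n) set)) = 1"
proof -
  have "(\<Sum>V\<in>out_alph h. chanW h p V U)
      = (\<Sum>r\<le>h. gauss_binom CARD('a) h r * (p (h - r) / gauss_binom CARD('a) h r))"
    unfolding chanW_def using assms by (intro sum_subspaces_of) (simp add: in_alph_def)
  also have "\<dots> = (\<Sum>r\<le>h. p (h - r))"
    using gauss_binom_pos_h[where 'a='a] by (intro sum.cong) (auto simp: less_le)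
  finally show ?thesis using sum_atMost_reverse[of p h] p_sum by simp
qed

lemma subspace_out_dist_nonneg:
  "V \<in> out_alph h \<Longrightarrow> 0 \<le> subspace_out_dist h p (V :: ('a::{finite,field}^'n) set)"
  unfolding subspace_out_dist_def using out_alph_mem p_nonneg gauss_binom_pos_T[where 'a='a]
  by (auto intro!: divide_nonneg_pos)

lemma subspace_out_dist_sum:
  "(\<Sum>V\<in>out_alph h. subspace_out_dist h p (V :: ('a::{finite,field}^'n) set)) = 1"
proof -
  have "(\<Sum>V\<in>(out_alph h :: ('a^'n) set set). subspace_out_dist h p V)
      = (\<Sum>r\<le>h. \<Sum>V\<in>(grass r :: ('a^'n) set set). p (h - r) / gauss_binom CARD('a) CARD('n) r)"
    unfolding sum_out_alph subspace_out_dist_def by (intro sum.cong) (auto simp: grass_def)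
  also have "\<dots> = (\<Sum>r\<le>h. p (h - r))"
  proof (rule sum.cong[OF refl])
    fix r assume "r \<in> {..h}"
    hence "real (card (grass r :: ('a^'n) set set)) = gauss_binom CARD('a) CARD('n) r"
      "gauss_binom CARD('a) CARD('n) r > 0"
      using card_grass[where 'a='a and 'n='n] h_le gauss_binom_pos_T[where 'a='a] by auto
    thus "(\<Sum>V\<in>(grass r :: ('a^'n) set set). p (h - r) / gauss_binom CARD('a) CARD('n) r) = p (h - r)"
      by simp
  qed
  finally show ?thesis using sum_atMost_reverse[of p h] p_sum by simp
qed

lemma subspace_out_dist_pos:
  assumes "V \<in> out_alph h" and "chanW h p V U \<noteq> 0"
  shows "0 < subspace_out_dist h p (V :: ('a::{finite,field}^'n) set)"
proof -
  have "p (h - sdim V) \<noteq> 0" using assms(2) unfolding chanW_def by (auto split: if_splits)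
  thus ?thesis unfolding subspace_out_dist_def
    using p_nonneg gauss_binom_pos_T[where 'a='a] out_alph_mem[OF assms(1)] by (simp add: less_le)
qed

text \<open>Constant information density: for V \<subseteq> U of dimension r,
  W(V|U)/R(V) = [T, r]_q / [h, r]_q does not depend on U, and the dimension is
  h - (rank deficiency).\<close>
lemma chanW_density:
  fixes U :: "('a::{finite,field}^'n) set"
  assumes U: "U \<in> in_alph h" and b: "b > 1"
  shows "(\<Sum>V\<in>out_alph h. if chanW h p V U = 0 then 0
            else chanW h p V U * log b (chanW h p V U / subspace_out_dist h p V))
       = (\<Sum>r\<le>h. p r * log b (gauss_binom CARD('a) CARD('n) (h - r)
                                / gauss_binom CARD('a) h (h - r)))"
    (is "?lhs = _")
proof -
  let ?gh = "gauss_binom CARD('a) h" and ?gT = "gauss_binom CARD('a) CARD('n)"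
  define f where "f = (\<lambda>r. if p (h - r) = 0 then 0 else p (h - r) / ?gh r * log b (?gT r / ?gh r))"
  have "?lhs = (\<Sum>V\<in>out_alph h. if V \<subseteq> U then f (sdim V) else 0)"
  proof (rule sum.cong[OF refl])
    fix V :: "('a^'n) set" assume V: "V \<in> out_alph h"
    have pos: "?gh (sdim V) > 0" "?gT (sdim V) > 0"
      using out_alph_mem[OF V] gauss_binom_pos_h[where 'a='a] gauss_binom_pos_T[where 'a='a] by auto
    show "(if chanW h p V U = 0 then 0
            else chanW h p V U * log b (chanW h p V U / subspace_out_dist h p V))
        = (if V \<subseteq> U then f (sdim V) else 0)"
      using pos unfolding f_def chanW_def subspace_out_dist_def by (auto simp: field_simps)
  qed
  also have "\<dots> = (\<Sum>r\<le>h. ?gh r * f r)"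
    using U by (intro sum_subspaces_of) (simp add: in_alph_def)
  also have "\<dots> = (\<Sum>r\<le>h. p (h - r) * log b (?gT r / ?gh r))"
    using gauss_binom_pos_h[where 'a='a] unfolding f_def by (intro sum.cong) (auto simp: less_le)
  also have "\<dots> = (\<Sum>r\<le>h. p r * log b (?gT (h - r) / ?gh (h - r)))"
    using sum_atMost_reverse[of "\<lambda>r. p r * log b (?gT (h - r) / ?gh (h - r))" h] by simp
  finally show ?thesis .
qed

text \<open>The uniform input distribution on P(F_q^T, h) induces the output R: an
  r-space V lies in (qfall(T,r,h-r)/qfall(h,r,h-r)) of the [T, h]_q inputs, and the
  flag identity turns the resulting ratio into 1/[T, r]_q.\<close>
lemma uniform_input_out_dist:
  fixes V :: "('a::{finite,field}^'n) set"
  assumes V: "V \<in> out_alph h"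
  shows "(\<Sum>U\<in>in_alph h. 1 / real (card (in_alph h :: ('a::{finite,field}^'n) set set))
            * chanW h p V U) = subspace_out_dist h p V"
proof -
  let ?q = "CARD('a)" and ?T = "CARD('n)"
  define r where "r = sdim V"
  have r: "r \<le> h" "V \<in> grass r" using out_alph_mem[OF V] unfolding r_def by auto
  define G where "G = real (card (in_alph h :: ('a^'n) set set))"
  define N where "N = real (card {U \<in> grass h. V \<subseteq> U})"
  have G: "G = gauss_binom ?q ?T h" unfolding G_def in_alph_def using card_grass h_le by blast
  have pos: "qfall ?q h r (h - r) > 0" "qfall ?q ?T r (h - r) > 0"
    using qfall_pos[OF card_field_ge2[where 'a='a]] r h_le by auto
  have N: "N = qfall ?q ?T r (h - r) / qfall ?q h r (h - r)"
    using card_superspaces[where 'a='a and 'n='n, OF r(2) r(1) h_le] pos unfolding N_def by (simp add: eq_divide_eq)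
  have flag: "G * gauss_binom ?q h r = N * gauss_binom ?q ?T r"
    unfolding G N using gauss_binom_flag[OF card_field_ge2[where 'a='a] r(1) h_le] .
  have "N > 0" unfolding N using pos by simp
  have "(\<Sum>U\<in>in_alph h. 1 / G * chanW h p V U)
      = (\<Sum>U\<in>grass h. if V \<subseteq> U then 1 / G * (p (h - r) / gauss_binom ?q h r) else 0)"
    unfolding chanW_def r_def in_alph_def by (intro sum.cong) auto
  also have "\<dots> = (\<Sum>U\<in>{U \<in> grass h. V \<subseteq> U}. 1 / G * (p (h - r) / gauss_binom ?q h r))"
    by (rule sum.inter_filter[symmetric]) simp
  also have "\<dots> = N * p (h - r) / (G * gauss_binom ?q h r)" unfolding N_def by simp
  also have "\<dots> = p (h - r) / gauss_binom ?q ?T r" unfolding flag using \<open>N > 0\<close> by simp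
  finally show ?thesis unfolding G_def subspace_out_dist_def r_def .
qed

end

lemma subspace_channel_constant_density:
  fixes h :: nat and p :: "nat \<Rightarrow> real" and b :: real
  assumes "h \<le> CARD('n)" and "b > 1" and "\<forall>r\<le>h. 0 \<le> p r" and "(\<Sum>r\<le>h. p r) = 1"
  shows "constant_density_channel b (in_alph h :: ('a::{finite,field}^'n) set set) (out_alph h)
           (chanW h p) (subspace_out_dist h p)
           (\<Sum>r\<le>h. p r * log b (gauss_binom CARD('a) CARD('n) (h - r)
                                  / gauss_binom CARD('a) h (h - r)))"
  using assms chanW_nonneg chanW_row_sum subspace_out_dist_nonneg subspace_out_dist_sum
    subspace_out_dist_pos chanW_density
  by unfold_locales auto

theorem theorem4:
  fixes h :: nat and p :: "nat \<Rightarrow> real" and b :: real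
    and Xty :: "('a::{finite,field} ^ 'n) itself"
  assumes "1 \<le> h" and "h \<le> CARD('n)"
    and "b > 1"
    and "\<forall>r\<le>h. 0 \<le> p r" and "(\<Sum>r\<le>h. p r) = 1"
  defines "MI \<equiv> mutual_info_dmc b (in_alph h :: ('a ^ 'n) set set) (out_alph h) (chanW h p)"
    and "C \<equiv> (\<Sum>r\<le>h. p r * log b (gauss_binom CARD('a) CARD('n) (h - r)
                                       / gauss_binom CARD('a) h (h - r)))"
  shows "(\<forall>P. is_dist (in_alph h :: ('a ^ 'n) set set) P \<longrightarrow> MI P \<le> C)
       \<and> (\<exists>P. is_dist (in_alph h :: ('a ^ 'n) set set) P \<and> MI P = C)"
proof -
  interpret constant_density_channel b "in_alph h :: ('a ^ 'n) set set" "out_alph h"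
      "chanW h p" "subspace_out_dist h p" C
    unfolding C_def using subspace_channel_constant_density assms(2-5) .
  define uniform where
    "uniform = (\<lambda>U::('a ^ 'n) set. 1 / real (card (in_alph h :: ('a ^ 'n) set set)))"
  have "in_alph h \<noteq> ({} :: ('a ^ 'n) set set)"
    using card_grass[where 'a='a and 'n='n, OF assms(2)]
      gauss_binom_pos[OF card_field_ge2[where 'a='a] assms(2)]
    unfolding in_alph_def by auto
  hence uniform_dist: "is_dist (in_alph h :: ('a ^ 'n) set set) uniform"
    unfolding is_dist_def uniform_def by (simp add: card_gt_0_iff)
  have "MI uniform = C"
    unfolding MI_def using uniform_dist
    by (rule mutual_info_eq)
      (use uniform_input_out_dist[OF assms(2,4,5)] in \<open>simp only: out_dist_def uniform_def\<close>)
  thus ?thesis using mutual_info_le uniform_dist unfolding MI_def by blast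
qed

end
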